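(* Let $m\ge 2$, $n\ge 2$, and let $P:[m]\times[m]\to\mathbb{R}\mathrm{P}^n$ be a Q-net. Suppose that for every $d\in[m-1]$ the iterated Laplace transforms $\mathcal{L}_A^dP,\ \mathcal{L}_B^dP:[m-d]\times[m-d]\to\mathbb{R}\mathrm{P}^n$ are well-defined Q-nets. Then $\mathcal{L}_A^{m-1}P$ and $\mathcal{L}_B^{m-1}P$ are two points (each is defined on the one-element set $[1]\times[1]$). Suppose moreover that all points $P_{i,j}$ with $(i,j)\in[m]\times[m]$, $(i,j)\neq(m,m)$, lie on a quadric $\mathcal{Q}\subset\mathbb{R}\mathrm{P}^n$. Then $P_{m,m}\in\mathcal{Q}$ if and only if the points $\mathcal{L}_A^{m-1}P$ and $\mathcal{L}_B^{m-1}P$ are conjugate with respect to $\mathcal{Q}$.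
   Context: $[m]=\{1,\dots,m\}$. $X\vee Y$ denotes the projective join. A Q-net on $D\subset\mathbb{Z}^2$ (here $D=[k]\times[k]$) is a map $P:D\to\mathbb{R}\mathrm{P}^n$ such that for every elementary quad in $D$ the four points $P_{i,j},P_{i+1,j},P_{i+1,j+1},P_{i,j+1}$ are coplanar. Its Laplace points are $A_{i,j}=(P_{i,j}\vee P_{i+1,j})\cap(P_{i,j+1}\vee P_{i+1,j+1})$ and $B_{i,j}=(P_{i,j}\vee P_{i,j+1})\cap(P_{i+1,j}\vee P_{i+1,j+1})$; for $P$ on $[k]\times[k]$ the Laplace transforms are $\mathcal{L}_AP(i,j)=A_{i,j}$, $\mathcal{L}_BP(i,j)=B_{i,j}$ on $[k-1]\times[k-1]$, and $\mathcal{L}_A^d,\mathcal{L}_B^d$ denote $d$-fold iterates. A quadric is $\mathcal{Q}=\{[x]:\varphi(x,x)=0\}$ for a nonzero symmetric bilinear form $\varphi$ on $\mathbb{R}^{n+1}$; points $[x],[y]$ are conjugate w.r.t. $\mathcal{Q}$ if $\varphi(x,y)=0$. Standing assumption of the paper: all data are generic (in general position subject to the stated constraints; e.g. vertices of each quad distinct, no three collinear). *)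

theory Defs
  imports "HOL-Analysis.Analysis"
begin

text \<open>Points of RP^n are represented by nonzero vectors in real^'n (CARD('n) = n+1),
  up to nonzero scaling. Nets are indexed 1-based: a net on [k]x[k] is a map
  nat => nat => real^'n of which only the values at 1 <= i,j <= k matter.\<close>

text \<open>A generic quad: four points, any three of them linearly independent
  (i.e. the projective points are distinct and no three are collinear),
  and all four coplanar (span of dimension at most 3).\<close>
definition generic_planar_quad :: "real^'n \<Rightarrow> real^'n \<Rightarrow> real^'n \<Rightarrow> real^'n \<Rightarrow> bool" where
  "generic_planar_quad a b c d \<longleftrightarrow>
     dim {a, b, c} = 3 \<and> dim {a, b, d} = 3 \<and> dim {a, c, d} = 3 \<and> dim {b, c, d} = 3 \<and>
     dim {a, b, c, d} \<le> 3"

definition qnet :: "nat \<Rightarrow> (nat \<Rightarrow> nat \<Rightarrow> real^'n) \<Rightarrow> bool" where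
  "qnet k P \<longleftrightarrow>
     (\<forall>i\<in>{1..k}. \<forall>j\<in>{1..k}. P i j \<noteq> 0) \<and>
     (\<forall>i\<in>{1..<k}. \<forall>j\<in>{1..<k}.
        generic_planar_quad (P i j) (P (Suc i) j) (P (Suc i) (Suc j)) (P i (Suc j)))"

definition line_meet :: "real^'n \<Rightarrow> real^'n \<Rightarrow> real^'n \<Rightarrow> real^'n \<Rightarrow> (real^'n) set" where
  "line_meet a b c d = span {a, b} \<inter> span {c, d}"

text \<open>L is (a representative family of) the Laplace transform L_A of the net P on [k]x[k]:
  each L i j (i,j in [k-1]) is a nonzero vector representing the well-defined intersection
  point (P_{i,j} v P_{i+1,j}) meet (P_{i,j+1} v P_{i+1,j+1}).\<close>
definition laplace_A :: "nat \<Rightarrow> (nat \<Rightarrow> nat \<Rightarrow> real^'n) \<Rightarrow> (nat \<Rightarrow> nat \<Rightarrow> real^'n) \<Rightarrow> bool" where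
  "laplace_A k P L \<longleftrightarrow>
     (\<forall>i\<in>{1..<k}. \<forall>j\<in>{1..<k}.
        dim (line_meet (P i j) (P (Suc i) j) (P i (Suc j)) (P (Suc i) (Suc j))) = 1 \<and>
        L i j \<noteq> 0 \<and> L i j \<in> line_meet (P i j) (P (Suc i) j) (P i (Suc j)) (P (Suc i) (Suc j)))"

definition laplace_B :: "nat \<Rightarrow> (nat \<Rightarrow> nat \<Rightarrow> real^'n) \<Rightarrow> (nat \<Rightarrow> nat \<Rightarrow> real^'n) \<Rightarrow> bool" where
  "laplace_B k P L \<longleftrightarrow>
     (\<forall>i\<in>{1..<k}. \<forall>j\<in>{1..<k}.
        dim (line_meet (P i j) (P i (Suc j)) (P (Suc i) j) (P (Suc i) (Suc j))) = 1 \<and>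
        L i j \<noteq> 0 \<and> L i j \<in> line_meet (P i j) (P i (Suc j)) (P (Suc i) j) (P (Suc i) (Suc j)))"

definition bform :: "real^'n^'n \<Rightarrow> real^'n \<Rightarrow> real^'n \<Rightarrow> real" where
  "bform M x y = x \<bullet> (M *v y)"

definition on_quadric :: "real^'n^'n \<Rightarrow> real^'n \<Rightarrow> bool" where
  "on_quadric M x \<longleftrightarrow> bform M x x = 0"

definition conjugate :: "real^'n^'n \<Rightarrow> real^'n \<Rightarrow> real^'n \<Rightarrow> bool" where
  "conjugate M x y \<longleftrightarrow> bform M x y = 0"

end

theory Submission
  imports Defs
begin

text \<open>Label the vertices of a quad \<open>a = P(i,j)\<close>, \<open>b = P(i+1,j)\<close>, \<open>c = P(i+1,j+1)\<close>,
  \<open>d = P(i,j+1)\<close> and normalise \<open>c = x b + y d + z a\<close>. Then \<open>x b + z a\<close> represents the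
  Laplace point A and \<open>y d + z a\<close> the Laplace point B, and bilinearity gives, for two quads,
  \<open>\<phi>(x b + z a, y' d' + z' a') + \<phi>(y d + z a, x' b' + z' a') =
   \<phi>(c, c') - x x' \<phi>(b, b') - y y' \<phi>(d, d') + z z' \<phi>(a, a')\<close>.
  For a quad paired with itself the left side is \<open>2 \<phi>(A, B)\<close>, so if three vertices lie on the
  quadric, A and B are conjugate iff the fourth vertex lies on it too.
  Pairing a quad of \<open>L\<^sub>A\<^bsup>d-1\<^esup>P\<close> with the same quad of \<open>L\<^sub>B\<^bsup>d-1\<^esup>P\<close>, the
  second summand pairs the B-point of the first quad with the A-point of the second; as
  \<open>L\<^sub>B L\<^sub>A\<close> and \<open>L\<^sub>A L\<^sub>B\<close> are shifts, these are corresponding points of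
  \<open>L\<^sub>A\<^bsup>d-2\<^esup>P\<close> and \<open>L\<^sub>B\<^bsup>d-2\<^esup>P\<close>, conjugate by induction. Hence at every
  level all corresponding points are conjugate except at the far corner, and conjugacy there
  propagates down to \<open>P(m,m) \<in> \<Q>\<close>.\<close>

lemma bform_add_left: "bform M (x + y) z = bform M x z + bform M y z"
  by (simp add: bform_def inner_add_left)

lemma bform_add_right: "bform M z (x + y) = bform M z x + bform M z y"
  by (simp add: bform_def inner_add_right matrix_vector_right_distrib)

lemma bform_diff_left: "bform M (x - y) z = bform M x z - bform M y z"
  by (simp add: bform_def inner_diff_left)

lemma bform_diff_right: "bform M z (x - y) = bform M z x - bform M z y"
  by (simp add: bform_def inner_diff_right matrix_vector_mult_diff_distrib)

lemma bform_scaleR_left: "bform M (c *\<^sub>R x) z = c * bform M x z"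
  by (simp add: bform_def)

lemma bform_scaleR_right: "bform M z (c *\<^sub>R x) = c * bform M z x"
  by (simp add: bform_def matrix_vector_mult_scaleR)

lemmas bform_simps = bform_add_left bform_add_right bform_diff_left bform_diff_right
  bform_scaleR_left bform_scaleR_right

lemma bform_commute: "transpose M = M \<Longrightarrow> bform M x y = bform M y x"
  unfolding bform_def by (metis dot_lmul_matrix inner_commute transpose_matrix_vector)

lemma on_quadric_iff_conjugate: "on_quadric M x \<longleftrightarrow> conjugate M x x"
  by (simp add: on_quadric_def conjugate_def)

lemma generic_planar_quad_swap: "generic_planar_quad a d c b \<longleftrightarrow> generic_planar_quad a b c d"
  unfolding generic_planar_quad_def by (auto simp: insert_commute)

lemma dim_le_2_if_subset_span_pair:
  fixes a b :: "'a::real_vector"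
  assumes "S \<subseteq> span {a, b}"
  shows "dim S \<le> 2"
proof -
  have "card {a, b} \<le> 2"
    by (cases "a = b") auto
  then show ?thesis
    using dim_le_card[OF assms] by simp
qed

lemma dim_1_subspace_multiple:
  fixes S :: "'a::euclidean_space set"
  assumes "subspace S" "dim S = 1" "L \<in> S" "L \<noteq> 0" "v \<in> S"
  shows "\<exists>t. v = t *\<^sub>R L"
proof -
  have "span {L} = span S"
    by (rule dim_eq_span) (use assms in \<open>auto simp: dim_insert\<close>)
  then have "v \<in> span {L}"
    using assms span_base by blast
  then show ?thesis
    by (auto simp: span_singleton)
qed

lemma span_pair_Int_span_pair_subset:
  fixes u1 u2 u3 :: "'a::real_vector"
  assumes "3 \<le> dim {u1, u2, u3}"
  shows "span {u1, u2} \<inter> span {u2, u3} \<subseteq> span {u2}"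
proof
  fix v assume v: "v \<in> span {u1, u2} \<inter> span {u2, u3}"
  then obtain k where k: "v - k *\<^sub>R u1 \<in> span {u2}"
    by (auto simp: span_breakdown_eq)
  have "k = 0"
  proof (rule ccontr)
    assume "k \<noteq> 0"
    have "span {u2} \<subseteq> span {u2, u3}"
      by (rule span_mono) auto
    then have "v - k *\<^sub>R u1 \<in> span {u2, u3}"
      using k by blast
    then have "v - (v - k *\<^sub>R u1) \<in> span {u2, u3}"
      using v by (blast intro: span_diff)
    then have "(1 / k) *\<^sub>R (v - (v - k *\<^sub>R u1)) \<in> span {u2, u3}"
      by (rule span_scale)
    then have "u1 \<in> span {u2, u3}"
      using \<open>k \<noteq> 0\<close> by simp
    then have "{u1, u2, u3} \<subseteq> span {u2, u3}"
      by (simp add: span_base)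
    then have "dim {u1, u2, u3} \<le> 2"
      by (rule dim_le_2_if_subset_span_pair)
    with assms show False
      by simp
  qed
  then show "v \<in> span {u2}"
    using k by simp
qed

lemma generic_planar_quad_decomp:
  assumes "generic_planar_quad a b c d"
  shows "\<exists>x y z. c = x *\<^sub>R b + y *\<^sub>R d + z *\<^sub>R a"
proof -
  have abd: "dim {a, b, d} = 3" and abcd: "dim {a, b, c, d} \<le> 3"
    using assms by (auto simp: generic_planar_quad_def)
  have "c \<in> span {a, b, d}"
  proof (rule ccontr)
    assume "c \<notin> span {a, b, d}"
    then have "dim (insert c {a, b, d}) = 4"
      using abd dim_insert[of c "{a, b, d}"] by simp
    then show False
      using abcd by (simp add: insert_commute)
  qed
  then have "c \<in> span {b, d, a}"
    by (simp add: insert_commute)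
  then obtain x where "c - x *\<^sub>R b \<in> span {d, a}"
    by (auto simp: span_breakdown_eq)
  then obtain y where "c - x *\<^sub>R b - y *\<^sub>R d \<in> span {a}"
    by (auto simp: span_breakdown_eq)
  then obtain z where "c - x *\<^sub>R b - y *\<^sub>R d = z *\<^sub>R a"
    by (auto simp: span_singleton)
  then have "c = x *\<^sub>R b + y *\<^sub>R d + z *\<^sub>R a"
    by (simp add: algebra_simps)
  then show ?thesis
    by blast
qed

lemma decomp_in_line_meet:
  assumes "c = x *\<^sub>R b + y *\<^sub>R d + z *\<^sub>R a"
  shows "x *\<^sub>R b + z *\<^sub>R a \<in> line_meet a b d c"
    and "y *\<^sub>R d + z *\<^sub>R a \<in> line_meet a d b c"
proof -
  have "x *\<^sub>R b + z *\<^sub>R a = c - y *\<^sub>R d" "y *\<^sub>R d + z *\<^sub>R a = c - x *\<^sub>R b"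
    using assms by (simp_all add: algebra_simps)
  moreover have "x *\<^sub>R b + z *\<^sub>R a \<in> span {a, b}" "c - y *\<^sub>R d \<in> span {d, c}"
    "y *\<^sub>R d + z *\<^sub>R a \<in> span {a, d}" "c - x *\<^sub>R b \<in> span {b, c}"
    by (simp_all add: span_add span_diff span_base span_scale)
  ultimately show "x *\<^sub>R b + z *\<^sub>R a \<in> line_meet a b d c" "y *\<^sub>R d + z *\<^sub>R a \<in> line_meet a d b c"
    unfolding line_meet_def by simp_all
qed

lemma laplace_A_point_multiple:
  assumes quad: "generic_planar_quad a b c d" and c: "c = x *\<^sub>R b + y *\<^sub>R d + z *\<^sub>R a"
    and "dim (line_meet a b d c) = 1" "L \<noteq> 0" "L \<in> line_meet a b d c"
  shows "\<exists>t. t \<noteq> 0 \<and> x *\<^sub>R b + z *\<^sub>R a = t *\<^sub>R L"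
proof -
  have "subspace (line_meet a b d c)"
    by (simp add: line_meet_def subspace_inter subspace_span)
  then obtain t where t: "x *\<^sub>R b + z *\<^sub>R a = t *\<^sub>R L"
    using dim_1_subspace_multiple decomp_in_line_meet(1)[OF c] assms by blast
  have "t \<noteq> 0"
  proof
    assume "t = 0"
    then have "c = y *\<^sub>R d"
      using t c by (simp add: algebra_simps)
    then have "{a, c, d} \<subseteq> span {a, d}"
      by (auto simp: span_base span_scale)
    then have "dim {a, c, d} \<le> 2"
      by (rule dim_le_2_if_subset_span_pair)
    then show False
      using quad by (simp add: generic_planar_quad_def)
  qed
  with t show ?thesis
    by blast
qed

lemma laplace_B_point_multiple:
  assumes "generic_planar_quad a b c d" and c: "c = x *\<^sub>R b + y *\<^sub>R d + z *\<^sub>R a"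
    and "dim (line_meet a d b c) = 1" "L \<noteq> 0" "L \<in> line_meet a d b c"
  shows "\<exists>t. t \<noteq> 0 \<and> y *\<^sub>R d + z *\<^sub>R a = t *\<^sub>R L"
proof -
  have "c = y *\<^sub>R d + x *\<^sub>R b + z *\<^sub>R a"
    using c by (simp add: algebra_simps)
  then show ?thesis
    using laplace_A_point_multiple[of a d c b y x z L] assms by (simp add: generic_planar_quad_swap)
qed

lemma bform_decomp_identity:
  assumes "c = x *\<^sub>R b + y *\<^sub>R d + z *\<^sub>R a"
    and "c' = x' *\<^sub>R b' + y' *\<^sub>R d' + z' *\<^sub>R a'"
  shows "bform M (x *\<^sub>R b + z *\<^sub>R a) (y' *\<^sub>R d' + z' *\<^sub>R a')
       + bform M (y *\<^sub>R d + z *\<^sub>R a) (x' *\<^sub>R b' + z' *\<^sub>R a')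
     = bform M c c' - x * x' * bform M b b' - y * y' * bform M d d' + z * z' * bform M a a'"
  unfolding assms by (simp add: bform_simps algebra_simps)

lemma laplace_points_bform_base:
  assumes M: "transpose M = M" and quad: "generic_planar_quad a b c d"
    and A: "dim (line_meet a b d c) = 1" "A \<noteq> 0" "A \<in> line_meet a b d c"
    and B: "dim (line_meet a d b c) = 1" "B \<noteq> 0" "B \<in> line_meet a d b c"
  shows "\<exists>t x y z. t \<noteq> 0 \<and>
    t * bform M A B = bform M c c - x * bform M b b - y * bform M d d + z * bform M a a"
proof -
  obtain x y z where c: "c = x *\<^sub>R b + y *\<^sub>R d + z *\<^sub>R a"
    using generic_planar_quad_decomp[OF quad] by blast
  obtain s where s: "s \<noteq> 0" "x *\<^sub>R b + z *\<^sub>R a = s *\<^sub>R A"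
    using laplace_A_point_multiple[OF quad c A] by blast
  obtain t where t: "t \<noteq> 0" "y *\<^sub>R d + z *\<^sub>R a = t *\<^sub>R B"
    using laplace_B_point_multiple[OF quad c B] by blast
  have "bform M (s *\<^sub>R A) (t *\<^sub>R B) + bform M (t *\<^sub>R B) (s *\<^sub>R A)
     = bform M c c - x * x * bform M b b - y * y * bform M d d + z * z * bform M a a"
    using bform_decomp_identity[OF c c] unfolding s(2) t(2) .
  then have "(2 * s * t) * bform M A B
     = bform M c c - x * x * bform M b b - y * y * bform M d d + z * z * bform M a a"
    using bform_commute[OF M, of B A] by (simp add: bform_simps)
  moreover have "2 * s * t \<noteq> 0"
    using s t by simp
  ultimately show ?thesis
    by blast
qed

lemma laplace_points_bform_step:
  assumes quad: "generic_planar_quad a b c d" and quad': "generic_planar_quad a' b' c' d'"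
    and A: "dim (line_meet a b d c) = 1" "A \<noteq> 0" "A \<in> line_meet a b d c"
    and B: "dim (line_meet a' d' b' c') = 1" "B \<noteq> 0" "B \<in> line_meet a' d' b' c'"
    and u: "line_meet a d b c \<subseteq> span {u}" and w: "line_meet a' b' d' c' \<subseteq> span {w}"
    and uw: "bform M u w = 0"
  shows "\<exists>t x y z. t \<noteq> 0 \<and>
    t * bform M A B = bform M c c' - x * bform M b b' - y * bform M d d' + z * bform M a a'"
proof -
  obtain x y z where c: "c = x *\<^sub>R b + y *\<^sub>R d + z *\<^sub>R a"
    using generic_planar_quad_decomp[OF quad] by blast
  obtain x' y' z' where c': "c' = x' *\<^sub>R b' + y' *\<^sub>R d' + z' *\<^sub>R a'"
    using generic_planar_quad_decomp[OF quad'] by blast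
  obtain s where s: "s \<noteq> 0" "x *\<^sub>R b + z *\<^sub>R a = s *\<^sub>R A"
    using laplace_A_point_multiple[OF quad c A] by blast
  obtain t where t: "t \<noteq> 0" "y' *\<^sub>R d' + z' *\<^sub>R a' = t *\<^sub>R B"
    using laplace_B_point_multiple[OF quad' c' B] by blast
  obtain p where p: "y *\<^sub>R d + z *\<^sub>R a = p *\<^sub>R u"
    using decomp_in_line_meet(2)[OF c] u by (auto simp: span_singleton)
  obtain q where q: "x' *\<^sub>R b' + z' *\<^sub>R a' = q *\<^sub>R w"
    using decomp_in_line_meet(1)[OF c'] w by (auto simp: span_singleton)
  have "bform M (s *\<^sub>R A) (t *\<^sub>R B) + bform M (p *\<^sub>R u) (q *\<^sub>R w)
     = bform M c c' - x * x' * bform M b b' - y * y' * bform M d d' + z * z' * bform M a a'"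
    using bform_decomp_identity[OF c c'] unfolding s(2) t(2) p q .
  then have "(s * t) * bform M A B
     = bform M c c' - x * x' * bform M b b' - y * y' * bform M d d' + z * z' * bform M a a'"
    by (simp add: bform_simps uw mult_ac)
  moreover have "s * t \<noteq> 0"
    using s t by simp
  ultimately show ?thesis
    by blast
qed

lemma qnetD:
  assumes "qnet k U" "i \<in> {1..<k}" "j \<in> {1..<k}"
  shows "generic_planar_quad (U i j) (U (Suc i) j) (U (Suc i) (Suc j)) (U i (Suc j))"
  using assms unfolding qnet_def by auto

lemma laplace_AD:
  assumes "laplace_A k U A" "i \<in> {1..<k}" "j \<in> {1..<k}"
  shows "dim (line_meet (U i j) (U (Suc i) j) (U i (Suc j)) (U (Suc i) (Suc j))) = 1"
    and "A i j \<noteq> 0"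
    and "A i j \<in> line_meet (U i j) (U (Suc i) j) (U i (Suc j)) (U (Suc i) (Suc j))"
  using assms unfolding laplace_A_def by auto

lemma laplace_BD:
  assumes "laplace_B k U B" "i \<in> {1..<k}" "j \<in> {1..<k}"
  shows "dim (line_meet (U i j) (U i (Suc j)) (U (Suc i) j) (U (Suc i) (Suc j))) = 1"
    and "B i j \<noteq> 0"
    and "B i j \<in> line_meet (U i j) (U i (Suc j)) (U (Suc i) j) (U (Suc i) (Suc j))"
  using assms unfolding laplace_B_def by auto

lemma qnet_transpose: "qnet k U \<Longrightarrow> qnet k (\<lambda>i j. U j i)"
  unfolding qnet_def using generic_planar_quad_swap by blast

lemma laplace_B_imp_laplace_A_transpose: "laplace_B k U L \<Longrightarrow> laplace_A k (\<lambda>i j. U j i) (\<lambda>i j. L j i)"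
  unfolding laplace_A_def laplace_B_def by blast

lemma laplace_B_meet_of_laplace_A:
  assumes lap: "laplace_A (Suc (Suc k)) U0 U" and net: "qnet (Suc k) U"
    and ij: "i \<in> {1..k}" "j \<in> {1..k}"
  shows "line_meet (U i j) (U i (Suc j)) (U (Suc i) j) (U (Suc i) (Suc j))
    \<subseteq> span {U0 (Suc i) (Suc j)}"
proof -
  let ?u1 = "U0 i (Suc j)" and ?u2 = "U0 (Suc i) (Suc j)" and ?u3 = "U0 (Suc (Suc i)) (Suc j)"
  have on_lines: "U p q \<in> span {U0 p q, U0 (Suc p) q} \<inter> span {U0 p (Suc q), U0 (Suc p) (Suc q)}"
    if "p \<in> {1..Suc k}" "q \<in> {1..Suc k}" for p q
    using laplace_AD(3)[OF lap] that unfolding line_meet_def by auto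
  then have left: "{U i j, U i (Suc j)} \<subseteq> span {?u1, ?u2}"
    and right: "{U (Suc i) j, U (Suc i) (Suc j)} \<subseteq> span {?u2, ?u3}"
    using ij by auto
  have "span {?u1, ?u2} \<subseteq> span {?u1, ?u2, ?u3}" "span {?u2, ?u3} \<subseteq> span {?u1, ?u2, ?u3}"
    by (rule span_mono, blast)+
  with left right have "{U i j, U (Suc i) j, U i (Suc j)} \<subseteq> span {?u1, ?u2, ?u3}"
    by blast
  then have "dim {U i j, U (Suc i) j, U i (Suc j)} \<le> dim {?u1, ?u2, ?u3}"
    by (rule dim_mono)
  moreover have "dim {U i j, U (Suc i) j, U i (Suc j)} = 3"
    using qnetD[OF net] ij by (simp add: generic_planar_quad_def)
  ultimately have "3 \<le> dim {?u1, ?u2, ?u3}"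
    by simp
  then have "span {?u1, ?u2} \<inter> span {?u2, ?u3} \<subseteq> span {?u2}"
    by (rule span_pair_Int_span_pair_subset)
  moreover have "span {U i j, U i (Suc j)} \<subseteq> span {?u1, ?u2}"
    "span {U (Suc i) j, U (Suc i) (Suc j)} \<subseteq> span {?u2, ?u3}"
    using left right by (simp_all add: span_minimal subspace_span)
  ultimately show ?thesis
    unfolding line_meet_def by blast
qed

lemma laplace_A_meet_of_laplace_B:
  assumes "laplace_B (Suc (Suc k)) V0 V" "qnet (Suc k) V" "i \<in> {1..k}" "j \<in> {1..k}"
  shows "line_meet (V i j) (V (Suc i) j) (V i (Suc j)) (V (Suc i) (Suc j))
    \<subseteq> span {V0 (Suc i) (Suc j)}"
  using laplace_B_meet_of_laplace_A[OF laplace_B_imp_laplace_A_transpose qnet_transpose,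
      OF assms(1,2,4,3)] .

definition conjugate_off_corner ::
    "real^'n^'n \<Rightarrow> nat \<Rightarrow> (nat \<Rightarrow> nat \<Rightarrow> real^'n) \<Rightarrow> (nat \<Rightarrow> nat \<Rightarrow> real^'n) \<Rightarrow> bool" where
  "conjugate_off_corner M k U V \<longleftrightarrow>
     (\<forall>i\<in>{1..k}. \<forall>j\<in>{1..k}. (i, j) \<noteq> (k, k) \<longrightarrow> conjugate M (U i j) (V i j))"

definition conjugacy_recurrence ::
    "real^'n^'n \<Rightarrow> nat \<Rightarrow> (nat \<Rightarrow> nat \<Rightarrow> real^'n) \<Rightarrow> (nat \<Rightarrow> nat \<Rightarrow> real^'n) \<Rightarrow>
      (nat \<Rightarrow> nat \<Rightarrow> real^'n) \<Rightarrow> (nat \<Rightarrow> nat \<Rightarrow> real^'n) \<Rightarrow> bool" where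
  "conjugacy_recurrence M k U V A B \<longleftrightarrow>
     (\<forall>i\<in>{1..k}. \<forall>j\<in>{1..k}. \<exists>t x y z. t \<noteq> 0 \<and>
        t * bform M (A i j) (B i j) = bform M (U (Suc i) (Suc j)) (V (Suc i) (Suc j))
          - x * bform M (U (Suc i) j) (V (Suc i) j) - y * bform M (U i (Suc j)) (V i (Suc j))
          + z * bform M (U i j) (V i j))"

lemma conjugacy_recurrence_base:
  assumes "transpose M = M" "qnet (Suc k) U" "laplace_A (Suc k) U A" "laplace_B (Suc k) U B"
  shows "conjugacy_recurrence M k U U A B"
  unfolding conjugacy_recurrence_def
proof (intro ballI)
  fix i j assume "i \<in> {1..k}" "j \<in> {1..k}"
  then have ij: "i \<in> {1..<Suc k}" "j \<in> {1..<Suc k}"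
    by auto
  show "\<exists>t x y z. t \<noteq> 0 \<and>
      t * bform M (A i j) (B i j) = bform M (U (Suc i) (Suc j)) (U (Suc i) (Suc j))
      - x * bform M (U (Suc i) j) (U (Suc i) j) - y * bform M (U i (Suc j)) (U i (Suc j))
      + z * bform M (U i j) (U i j)"
    by (rule laplace_points_bform_base[OF assms(1) qnetD[OF assms(2) ij]
          laplace_AD[OF assms(3) ij] laplace_BD[OF assms(4) ij]])
qed

lemma conjugacy_recurrence_step:
  assumes "qnet (Suc k) U" "qnet (Suc k) V" "laplace_A (Suc k) U A" "laplace_B (Suc k) V B"
    and "laplace_A (Suc (Suc k)) U0 U" "laplace_B (Suc (Suc k)) V0 V"
    and "conjugate_off_corner M (Suc (Suc k)) U0 V0"
  shows "conjugacy_recurrence M k U V A B"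
  unfolding conjugacy_recurrence_def
proof (intro ballI)
  fix i j assume ij: "i \<in> {1..k}" "j \<in> {1..k}"
  then have ij': "i \<in> {1..<Suc k}" "j \<in> {1..<Suc k}"
    by auto
  have "bform M (U0 (Suc i) (Suc j)) (V0 (Suc i) (Suc j)) = 0"
    using assms(7) ij unfolding conjugate_off_corner_def conjugate_def by auto
  then show "\<exists>t x y z. t \<noteq> 0 \<and>
      t * bform M (A i j) (B i j) = bform M (U (Suc i) (Suc j)) (V (Suc i) (Suc j))
      - x * bform M (U (Suc i) j) (V (Suc i) j) - y * bform M (U i (Suc j)) (V i (Suc j))
      + z * bform M (U i j) (V i j)"
    by (rule laplace_points_bform_step[OF qnetD[OF assms(1) ij'] qnetD[OF assms(2) ij']
          laplace_AD[OF assms(3) ij'] laplace_BD[OF assms(4) ij']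
          laplace_B_meet_of_laplace_A[OF assms(5,1) ij]
          laplace_A_meet_of_laplace_B[OF assms(6,2) ij]])
qed

lemma conjugate_iff_conjugate_Suc:
  assumes "conjugacy_recurrence M k U V A B" "conjugate_off_corner M (Suc k) U V"
    and "i \<in> {1..k}" "j \<in> {1..k}"
  shows "conjugate M (A i j) (B i j) \<longleftrightarrow> conjugate M (U (Suc i) (Suc j)) (V (Suc i) (Suc j))"
proof -
  obtain t x y z where t: "t \<noteq> 0"
    "t * bform M (A i j) (B i j) = bform M (U (Suc i) (Suc j)) (V (Suc i) (Suc j))
       - x * bform M (U (Suc i) j) (V (Suc i) j) - y * bform M (U i (Suc j)) (V i (Suc j))
       + z * bform M (U i j) (V i j)"
    using assms(1,3,4) unfolding conjugacy_recurrence_def by blast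
  have "bform M (U (Suc i) j) (V (Suc i) j) = 0" "bform M (U i (Suc j)) (V i (Suc j)) = 0"
    "bform M (U i j) (V i j) = 0"
    using assms(2-4) unfolding conjugate_off_corner_def conjugate_def by auto
  with t have "t * bform M (A i j) (B i j) = bform M (U (Suc i) (Suc j)) (V (Suc i) (Suc j))"
    by simp
  with t(1) show ?thesis
    by (auto simp: conjugate_def)
qed

lemma conjugate_off_corner_step:
  assumes "conjugacy_recurrence M k U V A B" "conjugate_off_corner M (Suc k) U V" "1 \<le> k"
  shows "conjugate_off_corner M k A B"
    and "conjugate M (A k k) (B k k) \<longleftrightarrow> conjugate M (U (Suc k) (Suc k)) (V (Suc k) (Suc k))"
  using conjugate_iff_conjugate_Suc[OF assms(1,2)] assms(2,3)
  unfolding conjugate_off_corner_def by auto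

lemma iterated_laplace_conjugacy:
  fixes P :: "nat \<Rightarrow> nat \<Rightarrow> real^'n" and LA LB :: "nat \<Rightarrow> nat \<Rightarrow> nat \<Rightarrow> real^'n"
  assumes "m \<ge> 2" and net: "qnet m P" and "LA 0 = P" "LB 0 = P"
    and hA: "\<forall>d\<in>{1..m-1}. laplace_A (m - d + 1) (LA (d - 1)) (LA d) \<and> qnet (m - d) (LA d)"
    and hB: "\<forall>d\<in>{1..m-1}. laplace_B (m - d + 1) (LB (d - 1)) (LB d) \<and> qnet (m - d) (LB d)"
    and M: "transpose M = M"
    and quadric: "\<forall>i\<in>{1..m}. \<forall>j\<in>{1..m}. (i, j) \<noteq> (m, m) \<longrightarrow> on_quadric M (P i j)"
    and "d \<le> m - 1"
  shows "conjugate_off_corner M (m - d) (LA d) (LB d) \<and>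
    (conjugate M (LA d (m - d) (m - d)) (LB d (m - d) (m - d)) \<longleftrightarrow> on_quadric M (P m m))"
proof -
  have level: "qnet k (LA (Suc e)) \<and> qnet k (LB (Suc e)) \<and>
      laplace_A (Suc k) (LA e) (LA (Suc e)) \<and> laplace_B (Suc k) (LB e) (LB (Suc e))"
    if "m = Suc e + k" "1 \<le> k" for e k
    using bspec[OF hA, of "Suc e"] bspec[OF hB, of "Suc e"] that by auto
  show ?thesis
    using \<open>d \<le> m - 1\<close>
  proof (induction d rule: induct_nat_012)
    case 0
    have "conjugate_off_corner M m P P"
      using quadric unfolding conjugate_off_corner_def on_quadric_iff_conjugate by blast
    then show ?case
      using \<open>LA 0 = P\<close> \<open>LB 0 = P\<close> by (simp add: on_quadric_iff_conjugate)
  next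
    case 1
    obtain k where k: "m = Suc (Suc k)"
      using \<open>m \<ge> 2\<close> by (metis add_2_eq_Suc le_Suc_ex)
    have rec: "conjugacy_recurrence M (Suc k) P P (LA 1) (LB 1)"
      using conjugacy_recurrence_base[OF M] net level[of 0 "Suc k"] \<open>LA 0 = P\<close> \<open>LB 0 = P\<close> k by simp
    have "conjugate_off_corner M (Suc (Suc k)) P P"
      using quadric k unfolding conjugate_off_corner_def on_quadric_iff_conjugate by blast
    from conjugate_off_corner_step[OF rec this] show ?case
      using k by (simp add: on_quadric_iff_conjugate)
  next
    case (ge2 n)
    define k where "k = m - Suc (Suc n)"
    have k: "1 \<le> k" "m - Suc n = Suc k" "m - n = Suc (Suc k)"
      using ge2.prems k_def by auto
    have IH0: "conjugate_off_corner M (Suc (Suc k)) (LA n) (LB n)"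
      using ge2.IH(1) ge2.prems k by simp
    have IH1: "conjugate_off_corner M (Suc k) (LA (Suc n)) (LB (Suc n))"
      "conjugate M (LA (Suc n) (Suc k) (Suc k)) (LB (Suc n) (Suc k) (Suc k)) \<longleftrightarrow> on_quadric M (P m m)"
      using ge2.IH(2) ge2.prems k by simp_all
    have "conjugacy_recurrence M k (LA (Suc n)) (LB (Suc n)) (LA (Suc (Suc n))) (LB (Suc (Suc n)))"
      using conjugacy_recurrence_step[OF _ _ _ _ _ _ IH0] level[of "Suc n" k] level[of n "Suc k"]
        ge2.prems k_def by simp
    then show ?case
      using conjugate_off_corner_step[OF _ IH1(1) k(1)] IH1(2) k_def by simp
  qed
qed

theorem theorem1p1:
  fixes m :: nat
    and P :: "nat \<Rightarrow> nat \<Rightarrow> real^'n"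
    and LA LB :: "nat \<Rightarrow> nat \<Rightarrow> nat \<Rightarrow> real^'n"
    and M :: "real^'n^'n"
  assumes "m \<ge> 2"
    and "CARD('n) \<ge> 3"
    and "qnet m P"
    and "LA 0 = P" and "LB 0 = P"
    and "\<forall>d\<in>{1..m-1}. laplace_A (m - d + 1) (LA (d - 1)) (LA d) \<and> qnet (m - d) (LA d)"
    and "\<forall>d\<in>{1..m-1}. laplace_B (m - d + 1) (LB (d - 1)) (LB d) \<and> qnet (m - d) (LB d)"
    and "transpose M = M" and "M \<noteq> 0"
    and "\<forall>i\<in>{1..m}. \<forall>j\<in>{1..m}. (i, j) \<noteq> (m, m) \<longrightarrow> on_quadric M (P i j)"
  shows "on_quadric M (P m m) \<longleftrightarrow> conjugate M (LA (m - 1) 1 1) (LB (m - 1) 1 1)"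
proof -
  have "m - (m - 1) = 1"
    using assms(1) by simp
  then show ?thesis
    using iterated_laplace_conjugacy[OF assms(1,3-8,10), of "m - 1"] by simp
qed

end
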